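(* Let $V$ be a $6$-dimensional real vector space with an $\mathrm{SU}(3)$-structure $(\omega,\psi^+)$ inducing the complex structure $J$ and metric $g$. Let $A$ be a $g$-symmetric endomorphism of $V$ with $AJ=JA$ and $\mathrm{tr}(A)=0$, and let $S$ be a $g$-symmetric endomorphism of $V$ with $SJ=-JS$. Set $\sigma=g(AJ\cdot,\cdot)\in\Lambda^2V^*$ and $\rho=S_*\psi^+:=-\psi^+(S\cdot,\cdot,\cdot)-\psi^+(\cdot,S\cdot,\cdot)-\psi^+(\cdot,\cdot,S\cdot)\in\Lambda^3V^*$. Then $A$ and $S$ commute if and only if $\sigma\wedge\rho=0$. Whenever this happens, there exists a unitary basis of $V$ (i.e. $g$-orthonormal basis $(e_1,\dots,e_6)$ with $Je_{2k-1}=e_{2k}$, $k=1,2,3$) consisting of common eigenvectors of $A$ and $S$.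
   Context: An $\mathrm{SU}(3)$-structure on a $6$-dimensional vector space $V$ is a pair $(\omega,\psi^+)$, $\omega$ a nondegenerate $2$-form and $\psi^+$ a definite $3$-form (i.e. $\iota_v\psi^+$ has rank $4$ for $v\ne0$; with the orientation $\omega^3$ it determines a complex structure $J$ by Hitchin's construction), such that $\psi^+\wedge\omega=0$, $g=\omega(\cdot,J\cdot)$ is positive definite and $\psi^+\wedge J\psi^+=\frac23\omega^3$. Equivalently, there is a $g$-orthonormal basis with dual basis $(e^i)$ such that $\omega=e^{12}+e^{34}+e^{56}$, $\psi^+=e^{135}-e^{146}-e^{236}-e^{245}$ and $Je_{2k-1}=e_{2k}$. *)

theory Defs
  imports "HOL-Analysis.Analysis"
begin

definition e2 :: "('v \<Rightarrow> nat \<Rightarrow> real) \<Rightarrow> nat \<Rightarrow> nat \<Rightarrow> 'v \<Rightarrow> 'v \<Rightarrow> real" where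
  "e2 c i j x y = c x i * c y j - c x j * c y i"

definition e3 :: "('v \<Rightarrow> nat \<Rightarrow> real) \<Rightarrow> nat \<Rightarrow> nat \<Rightarrow> nat \<Rightarrow> 'v \<Rightarrow> 'v \<Rightarrow> 'v \<Rightarrow> real" where
  "e3 c i j k x y z =
     c x i * c y j * c z k - c x i * c y k * c z j - c x j * c y i * c z k
   + c x j * c y k * c z i + c x k * c y i * c z j - c x k * c y j * c z i"

text \<open>(e, c) is a basis e_1..e_6 of V with dual basis c(-) i = e^i, and the data
  (omega, psi, J, g) are in the standard SU(3) normal form with respect to it:
  g orthonormal, omega = e^12+e^34+e^56, psi+ = e^135-e^146-e^236-e^245,
  J e_{2k-1} = e_{2k} (J linear, J^2 = -1).\<close>

definition su3_frame ::
  "('v::real_vector \<Rightarrow> 'v \<Rightarrow> real) \<Rightarrow> ('v \<Rightarrow> 'v \<Rightarrow> 'v \<Rightarrow> real) \<Rightarrow> ('v \<Rightarrow> 'v)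
   \<Rightarrow> ('v \<Rightarrow> 'v \<Rightarrow> real) \<Rightarrow> (nat \<Rightarrow> 'v) \<Rightarrow> ('v \<Rightarrow> nat \<Rightarrow> real) \<Rightarrow> bool" where
  "su3_frame \<omega> \<psi> J g e c \<longleftrightarrow>
     (\<forall>i. linear (\<lambda>x. c x i)) \<and>
     (\<forall>x. x = (\<Sum>i=1..6. c x i *\<^sub>R e i)) \<and>
     (\<forall>i\<in>{1..6}. \<forall>j\<in>{1..6}. c (e i) j = (if i = j then 1 else 0)) \<and>
     (\<forall>x y. g x y = (\<Sum>i=1..6. c x i * c y i)) \<and>
     (\<forall>x y. \<omega> x y = e2 c 1 2 x y + e2 c 3 4 x y + e2 c 5 6 x y) \<and>
     (\<forall>x y z. \<psi> x y z = e3 c 1 3 5 x y z - e3 c 1 4 6 x y z - e3 c 2 3 6 x y z - e3 c 2 4 5 x y z) \<and>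
     linear J \<and>
     (\<forall>k\<in>{1,2,3}. J (e (2*k - 1)) = e (2*k) \<and> J (e (2*k)) = - e (2*k - 1))"

definition trace_in :: "(nat \<Rightarrow> 'v) \<Rightarrow> ('v \<Rightarrow> nat \<Rightarrow> real) \<Rightarrow> ('v \<Rightarrow> 'v) \<Rightarrow> real" where
  "trace_in e c A = (\<Sum>i=1..6. c (A (e i)) i)"

definition wedge23 :: "('v \<Rightarrow> 'v \<Rightarrow> real) \<Rightarrow> ('v \<Rightarrow> 'v \<Rightarrow> 'v \<Rightarrow> real) \<Rightarrow> (nat \<Rightarrow> 'v) \<Rightarrow> real" where
  "wedge23 \<sigma> \<rho> vs = (\<Sum>p | p permutes {0..<5}.
      of_int (sign p) * \<sigma> (vs (p 0)) (vs (p 1)) * \<rho> (vs (p 2)) (vs (p 3)) (vs (p 4))) / 12"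

definition g_symmetric :: "('v \<Rightarrow> 'v \<Rightarrow> real) \<Rightarrow> ('v \<Rightarrow> 'v) \<Rightarrow> bool" where
  "g_symmetric g A \<longleftrightarrow> (\<forall>x y. g (A x) y = g x (A y))"

end

theory Submission
  imports Defs
begin

text \<open>
  Both sides of the equivalence are the vanishing of six numbers. The commutator \<open>A S - S A\<close> is
  \<open>g\<close>-skew and anticommutes with \<open>J\<close>, so it is determined by six of its matrix entries; the
  alternating 5-form \<open>\<sigma> \<and> \<rho>\<close> is determined by its values on the six basis 5-tuples that omit
  one \<open>e\<^sub>t\<close>. Once the matrices of \<open>A\<close> and \<open>S\<close> are written in the normal form forced by symmetry and
  by (anti)commutation with \<open>J\<close>, each of those six entries is \<open>\<plusminus>1/2\<close> times one of those six values.

  For the unitary basis, transport everything to \<open>\<real>\<^sup>6\<close>. Commuting self-adjoint maps have a common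
  unit eigenvector \<open>v\<close> (maximise \<open>\<langle>T x, x\<rangle>\<close> on the unit sphere of an invariant subspace, then
  repeat inside an eigenspace). Since \<open>A\<close> commutes and \<open>S\<close> anticommutes with \<open>J\<close>, \<open>J v\<close> is again
  a common eigenvector, and the orthogonal complement of \<open>{v, J v}\<close> is invariant under \<open>A\<close>, \<open>S\<close>
  and \<open>J\<close>; three rounds give the basis.
\<close>

section \<open>The wedge product of a 2-form and a 3-form\<close>

lemma wedge23_permute:
  assumes \<tau>: "\<tau> permutes {0..<5}"
  shows "wedge23 \<sigma> \<rho> (vs \<circ> \<tau>) = of_int (sign \<tau>) * wedge23 \<sigma> \<rho> vs"
proof -
  let ?G = "\<lambda>p. \<sigma> (vs (p 0)) (vs (p 1)) * \<rho> (vs (p 2)) (vs (p 3)) (vs (p (4::nat)))"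
  let ?P = "{p. p permutes {0..<5::nat}}"
  have "(\<Sum>p\<in>?P. of_int (sign p) * ?G p) = (\<Sum>p\<in>?P. of_int (sign (\<tau> \<circ> p)) * ?G (\<tau> \<circ> p))"
    by (rule setum_permutations_compose_left[OF \<tau>])
  also have "\<dots> = of_int (sign \<tau>) * (\<Sum>p\<in>?P. of_int (sign p) * ?G (\<tau> \<circ> p))"
  proof -
    have perm: "permutation p" if "p permutes {0..<5::nat}" for p
      using that by (rule permutes_imp_permutation[rotated]) simp
    show ?thesis
      using \<tau> by (auto simp: sum_distrib_left sign_compose perm intro!: sum.cong)
  qed
  finally have "of_int (sign \<tau>) * (\<Sum>p\<in>?P. of_int (sign p) * ?G p) = (\<Sum>p\<in>?P. of_int (sign p) * ?G (\<tau> \<circ> p))"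
    by (simp flip: of_int_mult)
  then show ?thesis
    by (simp add: wedge23_def mult.assoc)
qed

lemma wedge23_cong:
  assumes "\<And>k. k < 5 \<Longrightarrow> vs k = vs' k"
  shows "wedge23 \<sigma> \<rho> vs = wedge23 \<sigma> \<rho> vs'"
proof -
  have "p k < 5" if "p permutes {0..<5}" "k < 5" for p and k :: nat
    using that permutes_in_image by fastforce
  then show ?thesis
    unfolding wedge23_def using assms by (intro arg_cong[where f="\<lambda>x. x / 12"] sum.cong) auto
qed

lemma wedge23_expand:
  fixes \<sigma> :: "'v \<Rightarrow> 'v \<Rightarrow> real" and \<rho> :: "'v \<Rightarrow> 'v \<Rightarrow> 'v \<Rightarrow> real"
  assumes \<sigma>_anti: "\<And>x y. \<sigma> x y = - \<sigma> y x"
    and \<rho>_anti12: "\<And>x y z. \<rho> x y z = - \<rho> y x z"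
    and \<rho>_anti23: "\<And>x y z. \<rho> x y z = - \<rho> x z y"
  shows "wedge23 \<sigma> \<rho> vs =
      \<sigma> (vs 0) (vs 1) * \<rho> (vs 2) (vs 3) (vs 4) - \<sigma> (vs 0) (vs 2) * \<rho> (vs 1) (vs 3) (vs 4)
    + \<sigma> (vs 0) (vs 3) * \<rho> (vs 1) (vs 2) (vs 4) - \<sigma> (vs 0) (vs 4) * \<rho> (vs 1) (vs 2) (vs 3)
    + \<sigma> (vs 1) (vs 2) * \<rho> (vs 0) (vs 3) (vs 4) - \<sigma> (vs 1) (vs 3) * \<rho> (vs 0) (vs 2) (vs 4)
    + \<sigma> (vs 1) (vs 4) * \<rho> (vs 0) (vs 2) (vs 3) + \<sigma> (vs 2) (vs 3) * \<rho> (vs 0) (vs 1) (vs 4)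
    - \<sigma> (vs 2) (vs 4) * \<rho> (vs 0) (vs 1) (vs 3) + \<sigma> (vs 3) (vs 4) * \<rho> (vs 0) (vs 1) (vs 2)"
proof -
  have \<sigma>_sort: "\<sigma> (vs i) (vs j) = - \<sigma> (vs j) (vs i)" if "j < i" for i j
    by (rule \<sigma>_anti)
  have \<rho>_sort1: "\<rho> (vs i) (vs j) (vs k) = - \<rho> (vs j) (vs i) (vs k)" if "j < i" for i j k
    by (rule \<rho>_anti12)
  have \<rho>_sort2: "\<rho> (vs i) (vs j) (vs k) = - \<rho> (vs i) (vs k) (vs j)" if "k < j" for i j k
    by (rule \<rho>_anti23)
  have five: "{0..<5::nat} = insert 0 (insert 1 (insert 2 (insert 3 {4})))"
    by auto
  have fin: "finite {1, 2, 3, 4::nat}" "0 \<notin> {1, 2, 3, 4::nat}" "finite {2, 3, 4::nat}" "1 \<notin> {2, 3, 4::nat}"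
    "finite {3, 4::nat}" "2 \<notin> {3, 4::nat}" "finite {4::nat}" "3 \<notin> {4::nat}"
    by auto
  show ?thesis
    unfolding wedge23_def five
    unfolding sum_over_permutations_insert[OF fin(1,2)] sum_over_permutations_insert[OF fin(3,4)]
      sum_over_permutations_insert[OF fin(5,6)] sum_over_permutations_insert[OF fin(7,8)]
    unfolding permutes_sing
    \<comment> \<open>Evaluate the 120 terms, then sort the arguments of every factor by index, so that the terms
      collapse onto the ten shuffles, each occurring twelve times.\<close>
    apply (simp add: sign_swap_id permutation_swap_id sign_compose permutation_compose)
    apply (simp only: One_nat_def[symmetric])
    apply (simp only: \<sigma>_sort \<rho>_sort1 \<rho>_sort2 zero_less_one zero_less_numeral one_less_numeral_iff
        numeral_less_iff semiring_norm)
    apply (simp only: numeral_One)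
    apply algebra
    done
qed

lemma linear_mult_const_right: "linear f \<Longrightarrow> linear (\<lambda>x. f x * (r::real))"
  and linear_mult_const_left: "linear f \<Longrightarrow> linear (\<lambda>x. r * f x)"
  and linear_divide_const: "linear f \<Longrightarrow> linear (\<lambda>x. f x / r)"
  by (simp_all add: linear_iff algebra_simps add_divide_distrib)

lemma wedge23_linear_slot:
  assumes \<sigma>1: "\<And>y. linear (\<lambda>x. \<sigma> x y)" and \<sigma>2: "\<And>x. linear (\<lambda>y. \<sigma> x y)"
    and \<rho>1: "\<And>y z. linear (\<lambda>x. \<rho> x y z)" and \<rho>2: "\<And>x z. linear (\<lambda>y. \<rho> x y z)"
    and \<rho>3: "\<And>x y. linear (\<lambda>z. \<rho> x y z)" and k: "k < 5"
  shows "linear (\<lambda>x. wedge23 \<sigma> \<rho> (vs(k := x)))"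
proof -
  have term_linear: "linear (\<lambda>x. of_int (sign p) * \<sigma> ((vs(k := x)) (p 0)) ((vs(k := x)) (p 1))
      * \<rho> ((vs(k := x)) (p 2)) ((vs(k := x)) (p 3)) ((vs(k := x)) (p 4)))"
    if p: "p permutes {0..<5}" for p
  proof -
    have "k \<in> p ` {0..<5}"
      using permutes_image[OF p] k by simp
    then obtain j where j: "j < 5" "k = p j"
      by auto
    then have "j = 0 \<or> j = 1 \<or> j = 2 \<or> j = 3 \<or> j = 4"
      by auto
    with j show ?thesis
      using permutes_inj[OF p]
      by (auto simp: inj_eq linear_mult_const_right linear_mult_const_left \<sigma>1 \<sigma>2 \<rho>1 \<rho>2 \<rho>3)
  qed
  show ?thesis
    unfolding wedge23_def
    by (intro linear_divide_const linear_compose_sum ballI term_linear) simp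
qed

lemma multilinear_eq_0_if_eq_0_on_basis:
  fixes W :: "(nat \<Rightarrow> 'v::real_vector) \<Rightarrow> real"
  assumes linear_slot: "\<And>vs k. k < n \<Longrightarrow> linear (\<lambda>x. W (vs(k := x)))"
    and local: "\<And>vs vs'. (\<And>k. k < n \<Longrightarrow> vs k = vs' k) \<Longrightarrow> W vs = W vs'"
    and expansion: "\<And>x. x = (\<Sum>i\<in>I. c x i *\<^sub>R e i)"
    and basis: "\<And>idx. (\<And>k. k < n \<Longrightarrow> idx k \<in> I) \<Longrightarrow> W (e \<circ> idx) = 0"
  shows "W vs = 0"
proof -
  have "W vs = 0" if "\<And>k. m \<le> k \<Longrightarrow> k < n \<Longrightarrow> vs k \<in> e ` I" for m vs
    using that
  proof (induction m arbitrary: vs)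
    case 0
    then have "\<forall>k. \<exists>i. k < n \<longrightarrow> i \<in> I \<and> vs k = e i"
      by blast
    from choice[OF this] obtain idx where idx: "\<forall>k. k < n \<longrightarrow> idx k \<in> I \<and> vs k = e (idx k)"
      by blast
    then have "W vs = W (e \<circ> idx)"
      by (intro local) simp
    also have "\<dots> = 0"
      using idx by (intro basis) blast
    finally show ?case .
  next
    case (Suc m)
    show ?case
    proof (cases "m < n")
      case True
      note linear_m = linear_slot[OF True, of vs]
      have "W vs = W (vs(m := (\<Sum>i\<in>I. c (vs m) i *\<^sub>R e i)))"
        by (simp flip: expansion)
      also have "\<dots> = (\<Sum>i\<in>I. W (vs(m := c (vs m) i *\<^sub>R e i)))"
        by (rule linear_sum[OF linear_m])
      also have "\<dots> = (\<Sum>i\<in>I. c (vs m) i * W (vs(m := e i)))"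
        using linear_scale[OF linear_m] by simp
      also have "\<dots> = 0"
        using Suc by (intro sum.neutral) (simp add: le_Suc_eq)
      finally show ?thesis .
    next
      case False
      then have "vs k \<in> e ` I" if "m \<le> k" "k < n" for k
        using that by simp
      then show ?thesis
        by (rule Suc.IH)
    qed
  qed
  then show ?thesis
    by (metis not_le)
qed

text \<open>\<open>e \<circ> omit_index t\<close> is the basis 5-tuple \<open>(e\<^sub>1, \<dots>, e\<^sub>6)\<close> with \<open>e\<^sub>t\<close> left out.\<close>

definition omit_index :: "nat \<Rightarrow> nat \<Rightarrow> nat" where
  "omit_index t k = (if k + 1 < t then k + 1 else k + 2)"

lemma alternating_eq_0_if_eq_0_on_omit_index:
  fixes W :: "(nat \<Rightarrow> 'v) \<Rightarrow> real"
  assumes alternating: "\<And>\<tau> vs. \<tau> permutes {0..<5} \<Longrightarrow> W (vs \<circ> \<tau>) = of_int (sign \<tau>) * W vs"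
    and local: "\<And>vs vs'. (\<And>k. k < 5 \<Longrightarrow> vs k = vs' k) \<Longrightarrow> W vs = W vs'"
    and omit: "\<And>t. t \<in> {1..6} \<Longrightarrow> W (e \<circ> omit_index t) = 0"
    and idx: "\<And>k. k < 5 \<Longrightarrow> idx k \<in> {1..6}"
  shows "W (e \<circ> idx) = 0"
proof (cases "inj_on idx {0..<5}")
  case False
  then obtain a b where ab: "a < 5" "b < 5" "a \<noteq> b" "idx a = idx b"
    by (auto simp: inj_on_def)
  have "Transposition.transpose a b permutes {0..<5}"
    using ab by (intro permutes_swap_id) auto
  moreover have "(e \<circ> idx) \<circ> Transposition.transpose a b = e \<circ> idx"
    using ab by (auto simp: fun_eq_iff Transposition.transpose_def)
  ultimately have "W (e \<circ> idx) = of_int (sign (Transposition.transpose a b)) * W (e \<circ> idx)"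
    using alternating by metis
  with ab show ?thesis
    by (simp add: sign_swap_id)
next
  case True
  have "card (idx ` {0..<5}) = 5"
    using card_image[OF True] by simp
  moreover have "idx ` {0..<5} \<subseteq> {1..6}"
    using idx by auto
  moreover have "card {1..6::nat} = 6"
    by simp
  ultimately have "idx ` {0..<5} \<subset> {1..6}"
    by auto
  then obtain t where t: "t \<in> {1..6}" "t \<notin> idx ` {0..<5}"
    by blast
  define \<tau> where "\<tau> k = (if k < 5 then (if idx k < t then idx k - 1 else idx k - 2) else k)" for k
  have omit_\<tau>: "omit_index t (\<tau> k) = idx k" if "k < 5" for k
    using idx[OF that] t that by (force simp: omit_index_def \<tau>_def)
  have "\<tau> permutes {0..<5}"
  proof (rule bij_imp_permutes)
    have "\<tau> k < 5" if "k < 5" for k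
      using idx[OF that] t that by (force simp: \<tau>_def)
    moreover have "inj_on \<tau> {0..<5}"
      using True omit_\<tau> by (metis atLeastLessThan_iff inj_on_def)
    ultimately show "bij_betw \<tau> {0..<5} {0..<5}"
      by (simp add: bij_betw_def endo_inj_surj image_subset_iff)
    show "\<tau> k = k" if "k \<notin> {0..<5}" for k
      using that by (simp add: \<tau>_def)
  qed
  moreover have "W (e \<circ> idx) = W ((e \<circ> omit_index t) \<circ> \<tau>)"
    by (intro local) (simp add: omit_\<tau>)
  ultimately show ?thesis
    using alternating omit[OF t(1)] by simp
qed

lemma wedge23_eq_0_iff_on_omit_index:
  assumes \<sigma>1: "\<And>y. linear (\<lambda>x. \<sigma> x y)" and \<sigma>2: "\<And>x. linear (\<lambda>y. \<sigma> x y)"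
    and \<rho>1: "\<And>y z. linear (\<lambda>x. \<rho> x y z)" and \<rho>2: "\<And>x z. linear (\<lambda>y. \<rho> x y z)"
    and \<rho>3: "\<And>x y. linear (\<lambda>z. \<rho> x y z)"
    and expansion: "\<And>x. x = (\<Sum>i=1..6. c x i *\<^sub>R e i)"
  shows "(\<forall>vs. wedge23 \<sigma> \<rho> vs = 0) \<longleftrightarrow> (\<forall>t\<in>{1..6}. wedge23 \<sigma> \<rho> (e \<circ> omit_index t) = 0)"
proof (intro iffI allI)
  fix vs
  assume "\<forall>t\<in>{1..6}. wedge23 \<sigma> \<rho> (e \<circ> omit_index t) = 0"
  then have "wedge23 \<sigma> \<rho> (e \<circ> idx) = 0" if "\<And>k. k < 5 \<Longrightarrow> idx k \<in> {1..6}" for idx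
    using alternating_eq_0_if_eq_0_on_omit_index[where W = "wedge23 \<sigma> \<rho>", OF wedge23_permute wedge23_cong]
      that by blast
  then show "wedge23 \<sigma> \<rho> vs = 0"
    using multilinear_eq_0_if_eq_0_on_basis[where W = "wedge23 \<sigma> \<rho>" and n = 5,
        OF wedge23_linear_slot[OF \<sigma>1 \<sigma>2 \<rho>1 \<rho>2 \<rho>3] wedge23_cong expansion]
    by blast
qed simp

section \<open>Common eigenvectors adapted to a complex structure\<close>

lemma nonneg_quadratic_imp_linear_coeff_eq_0:
  fixes b q :: real
  assumes "q \<ge> 0" and nonneg: "\<And>t. 0 \<le> 2 * t * b + t\<^sup>2 * q"
  shows "b = 0"
proof -
  define t where "t = - b / (q + 1)"
  have "q + 1 \<noteq> 0"
    using \<open>q \<ge> 0\<close> by simp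
  then have tq: "t * (q + 1) = - b"
    by (simp add: t_def)
  have "(q + 1)\<^sup>2 * (2 * t * b + t\<^sup>2 * q) = 2 * b * (q + 1) * (t * (q + 1)) + q * (t * (q + 1))\<^sup>2"
    by (simp add: power2_eq_square algebra_simps)
  also have "\<dots> = - b\<^sup>2 * (q + 2)"
    unfolding tq by (simp add: power2_eq_square algebra_simps)
  finally have "(q + 1)\<^sup>2 * (2 * t * b + t\<^sup>2 * q) = - b\<^sup>2 * (q + 2)" .
  moreover have "0 \<le> (q + 1)\<^sup>2 * (2 * t * b + t\<^sup>2 * q)"
    using nonneg[of t] by simp
  ultimately have "b\<^sup>2 * (q + 2) \<le> 0"
    by linarith
  then show ?thesis
    using \<open>q \<ge> 0\<close> by (simp add: mult_le_0_iff)
qed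

lemma selfadjoint_eigenvector_in_subspace:
  fixes T :: "'a::euclidean_space \<Rightarrow> 'a"
  assumes T_lin: "linear T" and T_sa: "\<And>x y. inner (T x) y = inner x (T y)"
    and W: "subspace W" and T_W: "\<And>x. x \<in> W \<Longrightarrow> T x \<in> W"
    and "x0 \<in> W" "x0 \<noteq> 0"
  shows "\<exists>v\<in>W. norm v = 1 \<and> (\<exists>a. T v = a *\<^sub>R v)"
proof -
  let ?K = "sphere 0 1 \<inter> W"
  have "x0 /\<^sub>R norm x0 \<in> ?K"
    using assms(5,6) W by (simp add: subspace_scale)
  moreover have "compact ?K"
    by (rule compact_Int_closed[OF compact_sphere closed_subspace[OF W]])
  moreover have "continuous_on ?K (\<lambda>x. inner x (T x))"
    using T_lin by (intro continuous_intros linear_continuous_on linear_conv_bounded_linear[THEN iffD1])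
  ultimately obtain v where v: "v \<in> ?K" and v_max: "\<And>y. y \<in> ?K \<Longrightarrow> inner y (T y) \<le> inner v (T v)"
    using continuous_attains_sup[of ?K "\<lambda>x. inner x (T x)"] by blast
  define l where "l = inner v (T v)"
  have vW: "v \<in> W" and v_norm: "inner v v = 1"
    using v by (auto simp: dot_square_norm)
  \<comment> \<open>\<open>v\<close> maximises the Rayleigh quotient on \<open>W\<close>, so this form is nonnegative on \<open>W\<close> and vanishes
    at \<open>v\<close>; along \<open>v + t d\<close> this forces \<open>d = 0\<close>.\<close>
  have form_nonneg: "0 \<le> l * inner w w - inner w (T w)" if "w \<in> W" for w
  proof (cases "w = 0")
    case False
    have "w /\<^sub>R norm w \<in> ?K"
      using that False W by (simp add: subspace_scale)
    then have "inner (w /\<^sub>R norm w) (T (w /\<^sub>R norm w)) \<le> l"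
      unfolding l_def by (rule v_max)
    moreover have "inner (w /\<^sub>R norm w) (T (w /\<^sub>R norm w)) = inner w (T w) / (norm w)\<^sup>2"
      using linear_scale[OF T_lin] by (simp add: power2_eq_square divide_inverse)
    ultimately have "inner w (T w) / (norm w)\<^sup>2 \<le> l"
      by simp
    then show ?thesis
      using False by (simp add: divide_le_eq dot_square_norm algebra_simps)
  qed (simp add: linear_0[OF T_lin])
  define d where "d = l *\<^sub>R v - T v"
  have dW: "d \<in> W"
    using vW T_W W by (simp add: d_def subspace_diff subspace_scale)
  have "0 \<le> 2 * t * inner d d + t\<^sup>2 * (l * inner d d - inner d (T d))" for t
  proof -
    have "0 \<le> l * inner (v + t *\<^sub>R d) (v + t *\<^sub>R d) - inner (v + t *\<^sub>R d) (T (v + t *\<^sub>R d))"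
      using vW dW W by (intro form_nonneg) (simp add: subspace_add subspace_scale)
    also have "\<dots> = 2 * t * inner d d + t\<^sup>2 * (l * inner d d - inner d (T d))"
    proof -
      have "inner d d = l * inner v d - inner (T v) d"
        by (simp add: d_def inner_diff_left inner_diff_right inner_commute algebra_simps)
      then show ?thesis
        using v_norm T_sa[of v d]
        by (simp add: l_def linear_add[OF T_lin] linear_scale[OF T_lin] inner_add_left inner_add_right
            inner_commute[of d v] inner_commute[of "T v" d] power2_eq_square algebra_simps) algebra
    qed
    finally show ?thesis .
  qed
  then have "inner d d = 0"
    using nonneg_quadratic_imp_linear_coeff_eq_0 form_nonneg[OF dW] by blast
  then have "T v = l *\<^sub>R v"
    by (simp add: d_def)
  then show ?thesis
    using vW v by auto
qed

lemma commuting_selfadjoint_common_eigenvector: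
  fixes T U :: "'a::euclidean_space \<Rightarrow> 'a"
  assumes T_lin: "linear T" and T_sa: "\<And>x y. inner (T x) y = inner x (T y)"
    and U_lin: "linear U" and U_sa: "\<And>x y. inner (U x) y = inner x (U y)"
    and commute: "\<And>x. T (U x) = U (T x)"
    and W: "subspace W" and T_W: "\<And>x. x \<in> W \<Longrightarrow> T x \<in> W" and U_W: "\<And>x. x \<in> W \<Longrightarrow> U x \<in> W"
    and "x0 \<in> W" "x0 \<noteq> 0"
  shows "\<exists>v\<in>W. norm v = 1 \<and> (\<exists>a b. T v = a *\<^sub>R v \<and> U v = b *\<^sub>R v)"
proof -
  obtain u a where u: "u \<in> W" "norm u = 1" "T u = a *\<^sub>R u"
    using selfadjoint_eigenvector_in_subspace[OF T_lin T_sa W T_W assms(9,10)] by blast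
  let ?E = "{x \<in> W. T x = a *\<^sub>R x}"
  have "subspace ?E"
    using W by (auto simp: subspace_def linear_0[OF T_lin] linear_add[OF T_lin] linear_scale[OF T_lin]
        scaleR_add_right)
  moreover have "U x \<in> ?E" if "x \<in> ?E" for x
    using that U_W commute linear_scale[OF U_lin] by auto
  moreover have "u \<in> ?E" "u \<noteq> 0"
    using u by auto
  ultimately show ?thesis
    using selfadjoint_eigenvector_in_subspace[OF U_lin U_sa] by blast
qed

locale commuting_J_pair =
  fixes J A S :: "'a::euclidean_space \<Rightarrow> 'a"
  assumes linear_J: "linear J" and linear_A: "linear A" and linear_S: "linear S"
    and J_skew: "\<And>x y. inner (J x) y = - inner x (J y)"
    and J_J [simp]: "\<And>x. J (J x) = - x"
    and A_selfadjoint: "\<And>x y. inner (A x) y = inner x (A y)"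
    and S_selfadjoint: "\<And>x y. inner (S x) y = inner x (S y)"
    and A_J: "\<And>x. A (J x) = J (A x)"
    and S_J: "\<And>x. S (J x) = - J (S x)"
    and A_S: "\<And>x. A (S x) = S (A x)"
begin

lemma inner_J_J [simp]: "inner (J x) (J y) = inner x y"
  using J_skew[of x "J y"] J_J[of y] by simp

lemma norm_J [simp]: "norm (J x) = norm x"
  by (simp add: norm_eq_sqrt_inner)

lemma inner_J_self [simp]: "inner x (J x) = 0" "inner (J x) x = 0"
  using J_skew[of x x] by (simp_all add: inner_commute)

lemma J_common_eigenvector:
  assumes "A v = a *\<^sub>R v" "S v = b *\<^sub>R v"
  shows "A (J v) = a *\<^sub>R J v" "S (J v) = (- b) *\<^sub>R J v"
  using assms A_J S_J linear_scale[OF linear_J] by auto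

definition J_orthogonal_complement :: "'a set \<Rightarrow> 'a set" where
  "J_orthogonal_complement F = {x. \<forall>u\<in>F. inner x u = 0 \<and> inner x (J u) = 0}"

lemma subspace_J_orthogonal_complement: "subspace (J_orthogonal_complement F)"
  unfolding subspace_def J_orthogonal_complement_def by (auto simp: inner_add_left)

lemma J_orthogonal_complement_invariant:
  assumes F: "\<And>u. u \<in> F \<Longrightarrow> \<exists>a b. A u = a *\<^sub>R u \<and> S u = b *\<^sub>R u"
    and x: "x \<in> J_orthogonal_complement F"
  shows "A x \<in> J_orthogonal_complement F" "S x \<in> J_orthogonal_complement F"
    "J x \<in> J_orthogonal_complement F"
proof -
  have orth: "inner x u = 0" "inner x (J u) = 0" if "u \<in> F" for u
    using x that by (auto simp: J_orthogonal_complement_def)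
  have "inner (A x) u = 0 \<and> inner (A x) (J u) = 0 \<and> inner (S x) u = 0 \<and> inner (S x) (J u) = 0"
    if u: "u \<in> F" for u
  proof -
    obtain a b where "A u = a *\<^sub>R u" "S u = b *\<^sub>R u"
      using F[OF u] by blast
    then show ?thesis
      using orth[OF u] J_common_eigenvector[of u a b] by (simp add: A_selfadjoint S_selfadjoint)
  qed
  moreover have "inner (J x) u = 0 \<and> inner (J x) (J u) = 0" if "u \<in> F" for u
    using orth[OF that] by (simp add: J_skew)
  ultimately show "A x \<in> J_orthogonal_complement F" "S x \<in> J_orthogonal_complement F"
    "J x \<in> J_orthogonal_complement F"
    by (auto simp: J_orthogonal_complement_def)
qed

lemma J_orthogonal_complement_nontrivial:
  assumes "finite F" "2 * card F < DIM('a)"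
  obtains x where "x \<in> J_orthogonal_complement F" "x \<noteq> 0"
proof -
  have "dim (F \<union> J ` F) \<le> card (F \<union> J ` F)"
    using assms(1) by (intro dim_le_card') auto
  also have "\<dots> \<le> 2 * card F"
    using card_Un_le[of F "J ` F"] card_image_le[OF assms(1), of J] by simp
  finally obtain x where x: "x \<noteq> 0" "\<And>y. y \<in> span (F \<union> J ` F) \<Longrightarrow> orthogonal x y"
    using orthogonal_to_subspace_exists[of "F \<union> J ` F"] assms(2) by auto
  have "inner x y = 0" if "y \<in> F \<union> J ` F" for y
    using x(2)[OF span_base[OF that]] by (simp add: orthogonal_def)
  then have "x \<in> J_orthogonal_complement F"
    by (simp add: J_orthogonal_complement_def)
  with x(1) show ?thesis
    using that by blast
qed

lemma unitary_common_eigenvectors: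
  assumes "2 * n \<le> DIM('a)"
  shows "\<exists>v. \<forall>i<n. norm (v i) = 1 \<and> (\<exists>a b. A (v i) = a *\<^sub>R v i \<and> S (v i) = b *\<^sub>R v i)
    \<and> (\<forall>j<i. inner (v i) (v j) = 0 \<and> inner (v i) (J (v j)) = 0)"
  using assms
proof (induction n)
  case (Suc n)
  then obtain v where v: "\<forall>i<n. norm (v i) = 1 \<and> (\<exists>a b. A (v i) = a *\<^sub>R v i \<and> S (v i) = b *\<^sub>R v i)
    \<and> (\<forall>j<i. inner (v i) (v j) = 0 \<and> inner (v i) (J (v j)) = 0)"
    by auto
  let ?F = "v ` {..<n}"
  have "2 * card ?F < DIM('a)"
    using card_image_le[of "{..<n}" v] Suc.prems by simp
  then obtain x where x: "x \<in> J_orthogonal_complement ?F" "x \<noteq> 0"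
    using J_orthogonal_complement_nontrivial by blast
  have F_eigen: "\<exists>a b. A y = a *\<^sub>R y \<and> S y = b *\<^sub>R y" if "y \<in> ?F" for y
    using v that by auto
  obtain u where u: "u \<in> J_orthogonal_complement ?F" "norm u = 1"
    "\<exists>a b. A u = a *\<^sub>R u \<and> S u = b *\<^sub>R u"
    using commuting_selfadjoint_common_eigenvector[OF linear_A A_selfadjoint linear_S S_selfadjoint A_S
        subspace_J_orthogonal_complement J_orthogonal_complement_invariant(1,2)[OF F_eigen] x]
    by blast
  define v' where "v' = v(n := u)"
  have "norm (v' i) = 1 \<and> (\<exists>a b. A (v' i) = a *\<^sub>R v' i \<and> S (v' i) = b *\<^sub>R v' i)
    \<and> (\<forall>j<i. inner (v' i) (v' j) = 0 \<and> inner (v' i) (J (v' j)) = 0)" if "i < Suc n" for i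
  proof (cases "i = n")
    case True
    have "inner u (v j) = 0 \<and> inner u (J (v j)) = 0" if "j < n" for j
      using u(1) that by (auto simp: J_orthogonal_complement_def)
    then show ?thesis
      using True u by (simp add: v'_def)
  next
    case False
    then show ?thesis
      using v that by (simp add: v'_def)
  qed
  then show ?case
    by blast
qed simp

lemma unitary_common_eigenbasis:
  assumes "2 * n \<le> DIM('a)"
  shows "\<exists>w. (\<forall>i\<in>{1..2*n}. \<forall>j\<in>{1..2*n}. inner (w i) (w j) = (if i = j then 1 else 0))
    \<and> (\<forall>k\<in>{1..n}. J (w (2*k - 1)) = w (2*k))
    \<and> (\<forall>i\<in>{1..2*n}. \<exists>a b. A (w i) = a *\<^sub>R w i \<and> S (w i) = b *\<^sub>R w i)"
proof -
  obtain v where v: "\<forall>i<n. norm (v i) = 1 \<and> (\<exists>a b. A (v i) = a *\<^sub>R v i \<and> S (v i) = b *\<^sub>R v i)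
    \<and> (\<forall>j<i. inner (v i) (v j) = 0 \<and> inner (v i) (J (v j)) = 0)"
    using unitary_common_eigenvectors[OF assms] by blast
  have orth: "inner (v p) (v q) = 0 \<and> inner (v p) (J (v q)) = 0" if "p < n" "q < n" "p \<noteq> q" for p q
  proof (cases "q < p")
    case True
    then show ?thesis
      using v that by blast
  next
    case False
    then have "inner (v q) (v p) = 0" "inner (v q) (J (v p)) = 0"
      using v that by auto
    then show ?thesis
      using J_skew[of "v p" "v q"] by (simp add: inner_commute)
  qed
  define w where "w i = (if odd i then v ((i - 1) div 2) else J (v ((i - 1) div 2)))" for i
  have block_lt: "(i - 1) div 2 < n" if "i \<in> {1..2*n}" for i
    using that by auto
  have "inner (w i) (w j) = (if i = j then 1 else 0)" if "i \<in> {1..2*n}" "j \<in> {1..2*n}" for i j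
  proof (cases "(i - 1) div 2 = (j - 1) div 2")
    case True
    then have "i = j \<or> odd i \<noteq> odd j"
      using that by (simp add: even_iff_mod_2_eq_zero) presburger
    then show ?thesis
      using v block_lt[OF that(1)] True by (auto simp: w_def dot_square_norm inner_commute)
  next
    case False
    then show ?thesis
      using orth[OF block_lt[OF that(1)] block_lt[OF that(2)] False]
      by (auto simp: w_def J_skew inner_commute)
  qed
  moreover have "J (w (2*k - 1)) = w (2*k)" if "k \<in> {1..n}" for k
  proof -
    have "(2*k - 1 - 1) div 2 = (2*k - 1) div 2"
      using that by presburger
    then show ?thesis
      using that by (simp add: w_def)
  qed
  moreover have "\<exists>a b. A (w i) = a *\<^sub>R w i \<and> S (w i) = b *\<^sub>R w i" if i: "i \<in> {1..2*n}" for i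
  proof -
    obtain a b where ab: "A (v ((i - 1) div 2)) = a *\<^sub>R v ((i - 1) div 2)"
      "S (v ((i - 1) div 2)) = b *\<^sub>R v ((i - 1) div 2)"
      using v block_lt[OF i] by blast
    then show ?thesis
      using J_common_eigenvector[OF ab] unfolding w_def by (cases "odd i") (auto simp del: scaleR_minus_left)
  qed
  ultimately show ?thesis
    by blast
qed

end

section \<open>Coordinates in an \<open>SU(3)\<close>-adapted basis\<close>

lemma atLeastAtMost_1_6: "{1..6::nat} = {1,2,3,4,5,6}"
  by auto

lemma sum_1_6: "(\<Sum>i=1..6. f i) = f 1 + f 2 + f 3 + f 4 + f 5 + (f (6::nat) :: 'a::comm_monoid_add)"
  unfolding atLeastAtMost_1_6 by (simp add: add.assoc)

locale su3_basis =
  fixes \<omega> g :: "'v::real_vector \<Rightarrow> 'v \<Rightarrow> real"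
    and \<psi> :: "'v \<Rightarrow> 'v \<Rightarrow> 'v \<Rightarrow> real"
    and J :: "'v \<Rightarrow> 'v"
    and e :: "nat \<Rightarrow> 'v" and c :: "'v \<Rightarrow> nat \<Rightarrow> real"
  assumes su3: "su3_frame \<omega> \<psi> J g e c"
begin

\<comment> \<open>Keeps indices such as \<open>e 1\<close> from being rewritten to \<open>e (Suc 0)\<close>, out of reach of \<open>J_basis\<close>.\<close>
declare One_nat_def [simp del]

lemma linear_coord: "linear (\<lambda>x. c x i)"
  using su3 unfolding su3_frame_def by blast

lemma basis_expansion: "x = (\<Sum>i=1..6. c x i *\<^sub>R e i)"
  using su3 unfolding su3_frame_def by blast

lemma coord_basis [simp]: "i \<in> {1..6} \<Longrightarrow> j \<in> {1..6} \<Longrightarrow> c (e i) j = (if i = j then 1 else 0)"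
  using su3 unfolding su3_frame_def by blast

lemma g_coords: "g x y = (\<Sum>i=1..6. c x i * c y i)"
  using su3 unfolding su3_frame_def by blast

lemma \<psi>_coords: "\<psi> x y z = e3 c 1 3 5 x y z - e3 c 1 4 6 x y z - e3 c 2 3 6 x y z - e3 c 2 4 5 x y z"
  using su3 unfolding su3_frame_def by blast

lemma linear_J: "linear J"
  using su3 unfolding su3_frame_def by blast

lemma J_basis [simp]:
  "J (e 1) = e 2" "J (e 2) = - e 1" "J (e 3) = e 4" "J (e 4) = - e 3" "J (e 5) = e 6" "J (e 6) = - e 5"
proof -
  have "\<forall>k\<in>{1,2,3}. J (e (2*k - 1)) = e (2*k) \<and> J (e (2*k)) = - e (2*k - 1)"
    using su3 unfolding su3_frame_def by blast
  then have J_pair: "J (e (2*k - 1)) = e (2*k) \<and> J (e (2*k)) = - e (2*k - 1)" if "k \<in> {1,2,3}" for k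
    using that by blast
  show "J (e 1) = e 2" "J (e 2) = - e 1" "J (e 3) = e 4" "J (e 4) = - e 3" "J (e 5) = e 6" "J (e 6) = - e 5"
    using J_pair[of 1] J_pair[of 2] J_pair[of 3] by (simp_all add: One_nat_def)
qed

lemma coord_add [simp]: "c (x + y) i = c x i + c y i"
  using linear_add[OF linear_coord] by simp

lemma coord_scaleR [simp]: "c (r *\<^sub>R x) i = r * c x i"
  using linear_scale[OF linear_coord] by simp

lemma coord_zero [simp]: "c 0 i = 0"
  using linear_0[OF linear_coord] by simp

lemma coord_diff [simp]: "c (x - y) i = c x i - c y i"
  using linear_diff[OF linear_coord] by simp

lemma coord_minus [simp]: "c (- x) i = - c x i"
  using linear_neg[OF linear_coord] by simp

lemma coord_linear_image:
  assumes "linear T"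
  shows "c (T x) i = (\<Sum>k=1..6. c x k * c (T (e k)) i)"
proof -
  have "T x = (\<Sum>k=1..6. c x k *\<^sub>R T (e k))"
    by (subst basis_expansion) (simp add: linear_sum[OF assms] linear_scale[OF assms])
  then show ?thesis
    by (simp add: linear_sum[OF linear_coord])
qed

lemma coord_J [simp]:
  "c (J y) 1 = - c y 2" "c (J y) 2 = c y 1" "c (J y) 3 = - c y 4" "c (J y) 4 = c y 3"
  "c (J y) 5 = - c y 6" "c (J y) 6 = c y 5"
  unfolding coord_linear_image[OF linear_J, of y] sum_1_6 J_basis by simp_all

lemma g_basis [simp]:
  assumes "b \<in> {1..6}"
  shows "g x (e b) = c x b"
proof -
  have "g x (e b) = (\<Sum>i\<in>{1..6}. if i = b then c x i else 0)"
    unfolding g_coords using assms by (intro sum.cong) auto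
  then show ?thesis
    using assms by simp
qed

lemma g_commute: "g x y = g y x"
  by (simp add: g_coords mult.commute)

lemma J_skew: "g (J x) y = - g x (J y)"
  unfolding g_coords sum_1_6 by (simp add: algebra_simps)

lemma J_J [simp]: "J (J x) = - x"
proof -
  have "J (J x) = (\<Sum>i=1..6. c (J (J x)) i *\<^sub>R e i)"
    by (rule basis_expansion)
  also have "\<dots> = - (\<Sum>i=1..6. c x i *\<^sub>R e i)"
    unfolding sum_1_6 by simp
  finally show ?thesis
    by (simp flip: basis_expansion)
qed

lemma \<psi>_swap12: "\<psi> x y z = - \<psi> y x z"
  and \<psi>_swap23: "\<psi> x y z = - \<psi> x z y"
  by (simp_all add: \<psi>_coords e3_def algebra_simps)

lemma linear_\<psi>:
  "linear (\<lambda>x. \<psi> x y z)" "linear (\<lambda>y. \<psi> x y z)" "linear (\<lambda>z. \<psi> x y z)"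
  by (simp_all add: linear_iff \<psi>_coords e3_def algebra_simps)

lemma linear_g: "linear (\<lambda>x. g x y)" "linear (\<lambda>y. g x y)"
  unfolding linear_iff g_coords sum_1_6 by (simp_all add: algebra_simps)

lemma g_symmetric_coord:
  assumes "g_symmetric g T" "i \<in> {1..6}" "j \<in> {1..6}"
  shows "c (T (e j)) i = c (T (e i)) j"
  using assms by (metis g_basis g_commute g_symmetric_def)

lemma skew_J_antilinear_eq_0:
  assumes T_lin: "linear T" and T_skew: "\<And>x y. g (T x) y = - g x (T y)"
    and T_J: "\<And>x. T (J x) = - J (T x)"
    and "c (T (e 3)) 1 = 0" "c (T (e 4)) 1 = 0" "c (T (e 5)) 1 = 0" "c (T (e 6)) 1 = 0"
      "c (T (e 5)) 3 = 0" "c (T (e 6)) 3 = 0"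
  shows "T x = 0"
proof -
  have skew: "c (T (e j)) i = - c (T (e i)) j" if "i \<in> {1..6}" "j \<in> {1..6}" for i j
    using T_skew[of "e j" "e i"] g_commute[of "e j"] that by simp
  have T_even: "T (e 2) = - J (T (e 1))" "T (e 4) = - J (T (e 3))" "T (e 6) = - J (T (e 5))"
    using T_J[of "e 1"] T_J[of "e 3"] T_J[of "e 5"] by simp_all
  have odd_coords: "c (T (e j)) i = 0" if "i \<in> {1,2,3,4,5,6}" "j \<in> {1,3,5}" for i j
  proof -
    note skew_odd = skew[of 1 1] skew[of 1 3] skew[of 1 5] skew[of 2 1] skew[of 2 3] skew[of 2 5]
      skew[of 3 1] skew[of 3 3] skew[of 3 5] skew[of 4 1] skew[of 4 3] skew[of 4 5]
      skew[of 5 1] skew[of 5 3] skew[of 5 5] skew[of 6 1] skew[of 6 3] skew[of 6 5]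
    show ?thesis
      using that skew_odd assms(4-9) by (auto simp: T_even)
  qed
  have T_basis_zero: "T (e j) = 0" if "j \<in> {1,3,5}" for j
    by (subst basis_expansion) (simp add: sum_1_6 odd_coords[OF _ that])
  have "T x = (\<Sum>j=1..6. c x j *\<^sub>R T (e j))"
    by (subst basis_expansion) (simp add: linear_sum[OF T_lin] linear_scale[OF T_lin])
  also have "\<dots> = 0"
    by (simp add: sum_1_6 T_even T_basis_zero linear_0[OF linear_J])
  finally show ?thesis .
qed

definition coords :: "'v \<Rightarrow> real \<times> real \<times> real \<times> real \<times> real \<times> real" where
  "coords x = (c x 1, c x 2, c x 3, c x 4, c x 5, c x 6)"

definition from_coords :: "real \<times> real \<times> real \<times> real \<times> real \<times> real \<Rightarrow> 'v" where
  "from_coords y = (case y of (y1, y2, y3, y4, y5, y6) \<Rightarrow>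
     y1 *\<^sub>R e 1 + y2 *\<^sub>R e 2 + y3 *\<^sub>R e 3 + y4 *\<^sub>R e 4 + y5 *\<^sub>R e 5 + y6 *\<^sub>R e 6)"

lemma coords_from_coords [simp]: "coords (from_coords y) = y"
  by (cases y) (simp add: coords_def from_coords_def)

lemma from_coords_coords [simp]: "from_coords (coords x) = x"
  using basis_expansion[of x] by (simp add: coords_def from_coords_def sum_1_6)

lemma linear_coords: "linear coords"
  by (simp add: linear_iff coords_def)

lemma linear_from_coords: "linear from_coords"
  by (rule linear_iff[THEN iffD2]) (auto simp: from_coords_def algebra_simps scaleR_add_left)

lemma inner_coords: "inner (coords x) (coords y) = g x y"
  by (simp add: coords_def inner_Pair g_coords sum_1_6 add.assoc)

end

locale su3_endomorphisms = su3_basis \<omega> g \<psi> J e c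
  for \<omega> g :: "'v::real_vector \<Rightarrow> 'v \<Rightarrow> real" and \<psi> J e c +
  fixes A S :: "'v \<Rightarrow> 'v" and \<sigma> \<rho>
  assumes linear_A: "linear A" and A_symmetric: "g_symmetric g A" and A_J: "A \<circ> J = J \<circ> A"
    and linear_S: "linear S" and S_symmetric: "g_symmetric g S" and S_J: "S \<circ> J = - (J \<circ> S)"
    and \<sigma>_def: "\<sigma> x y = g (A (J x)) y"
    and \<rho>_def: "\<rho> x y z = - \<psi> (S x) y z - \<psi> x (S y) z - \<psi> x y (S z)"
begin

lemma A_J_apply: "A (J x) = J (A x)"
  using A_J by (simp add: fun_eq_iff)

lemma S_J_apply: "S (J x) = - J (S x)"
  using S_J by (simp add: fun_eq_iff)

lemma A_even: "A (e 2) = J (A (e 1))" "A (e 4) = J (A (e 3))" "A (e 6) = J (A (e 5))"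
  using A_J_apply[of "e 1"] A_J_apply[of "e 3"] A_J_apply[of "e 5"] by simp_all

lemma S_even: "S (e 2) = - J (S (e 1))" "S (e 4) = - J (S (e 3))" "S (e 6) = - J (S (e 5))"
  using S_J_apply[of "e 1"] S_J_apply[of "e 3"] S_J_apply[of "e 5"] by simp_all

text \<open>Together with \<open>A_even\<close> and \<open>S_even\<close>, the next two lemmas rewrite every matrix entry of \<open>A\<close>
  (resp. \<open>S\<close>) to one of nine (resp. twelve) independent ones.\<close>

lemma A_coords:
  "c (A (e 3)) 1 = c (A (e 1)) 3" "c (A (e 5)) 1 = c (A (e 1)) 5" "c (A (e 5)) 3 = c (A (e 3)) 5"
  "c (A (e 1)) 2 = 0" "c (A (e 3)) 4 = 0" "c (A (e 5)) 6 = 0"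
  "c (A (e 1)) 4 = - c (A (e 3)) 2" "c (A (e 1)) 6 = - c (A (e 5)) 2" "c (A (e 3)) 6 = - c (A (e 5)) 4"
  using g_symmetric_coord[OF A_symmetric, of 1 3] g_symmetric_coord[OF A_symmetric, of 1 5]
    g_symmetric_coord[OF A_symmetric, of 3 5] g_symmetric_coord[OF A_symmetric, of 2 1]
    g_symmetric_coord[OF A_symmetric, of 4 3] g_symmetric_coord[OF A_symmetric, of 6 5]
    g_symmetric_coord[OF A_symmetric, of 4 1] g_symmetric_coord[OF A_symmetric, of 6 1]
    g_symmetric_coord[OF A_symmetric, of 6 3]
  by (simp_all add: A_even)

lemma S_coords:
  "c (S (e 3)) 1 = c (S (e 1)) 3" "c (S (e 5)) 1 = c (S (e 1)) 5" "c (S (e 5)) 3 = c (S (e 3)) 5"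
  "c (S (e 1)) 4 = c (S (e 3)) 2" "c (S (e 1)) 6 = c (S (e 5)) 2" "c (S (e 3)) 6 = c (S (e 5)) 4"
  using g_symmetric_coord[OF S_symmetric, of 1 3] g_symmetric_coord[OF S_symmetric, of 1 5]
    g_symmetric_coord[OF S_symmetric, of 3 5] g_symmetric_coord[OF S_symmetric, of 4 1]
    g_symmetric_coord[OF S_symmetric, of 6 1] g_symmetric_coord[OF S_symmetric, of 6 3]
  by (simp_all add: S_even)

lemma \<sigma>_swap: "\<sigma> x y = - \<sigma> y x"
proof -
  have "g (A (J x)) y = - g (A x) (J y)"
    by (simp add: A_J_apply J_skew)
  also have "\<dots> = - g x (A (J y))"
    using A_symmetric by (simp add: g_symmetric_def)
  also have "\<dots> = - g (A (J y)) x"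
    by (simp add: g_commute)
  finally show ?thesis
    by (simp add: \<sigma>_def)
qed

lemma \<rho>_swap12: "\<rho> x y z = - \<rho> y x z"
  by (simp add: \<rho>_def \<psi>_swap12[of "S x" y z] \<psi>_swap12[of x "S y" z] \<psi>_swap12[of x y "S z"])

lemma \<rho>_swap23: "\<rho> x y z = - \<rho> x z y"
  by (simp add: \<rho>_def \<psi>_swap23[of "S x" y z] \<psi>_swap23[of x "S y" z] \<psi>_swap23[of x y "S z"])

lemmas wedge23_\<sigma>\<rho>_expand = wedge23_expand[OF \<sigma>_swap \<rho>_swap12 \<rho>_swap23]

lemma coord_commutator:
  "c (A (S x) - S (A x)) i = (\<Sum>k=1..6. c (S x) k * c (A (e k)) i - c (A x) k * c (S (e k)) i)"
  by (simp add: coord_linear_image[OF linear_A, of "S x"] coord_linear_image[OF linear_S, of "A x"]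
      sum_subtractf)

lemma commutator_coords_wedge:
  "c (A (S (e 3)) - S (A (e 3))) 1 = wedge23 \<sigma> \<rho> (e \<circ> omit_index 5) / 2"
  "c (A (S (e 4)) - S (A (e 4))) 1 = wedge23 \<sigma> \<rho> (e \<circ> omit_index 6) / 2"
  "c (A (S (e 5)) - S (A (e 5))) 1 = - wedge23 \<sigma> \<rho> (e \<circ> omit_index 3) / 2"
  "c (A (S (e 6)) - S (A (e 6))) 1 = - wedge23 \<sigma> \<rho> (e \<circ> omit_index 4) / 2"
  "c (A (S (e 5)) - S (A (e 5))) 3 = wedge23 \<sigma> \<rho> (e \<circ> omit_index 1) / 2"
  "c (A (S (e 6)) - S (A (e 6))) 3 = wedge23 \<sigma> \<rho> (e \<circ> omit_index 2) / 2"
  unfolding coord_commutator sum_1_6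
  \<comment> \<open>\<open>add_2_eq_Suc\<close> would turn the indices \<open>k + 2\<close> produced by \<open>omit_index\<close> into \<open>Suc\<close> terms.\<close>
  by (simp add: wedge23_\<sigma>\<rho>_expand omit_index_def \<sigma>_def \<rho>_def \<psi>_coords e3_def
      A_even S_even A_coords S_coords linear_neg[OF linear_A] linear_neg[OF linear_S]
      del: add_2_eq_Suc add_2_eq_Suc'; algebra)+

lemma linear_\<sigma>: "linear (\<lambda>x. \<sigma> x y)" "linear (\<lambda>y. \<sigma> x y)"
  using linear_compose[OF linear_compose[OF linear_J linear_A] linear_g(1)] linear_g(2)
  by (simp_all add: \<sigma>_def o_def)

lemma linear_\<rho>: "linear (\<lambda>x. \<rho> x y z)" "linear (\<lambda>y. \<rho> x y z)" "linear (\<lambda>z. \<rho> x y z)"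
  using linear_compose[OF linear_S linear_\<psi>(1)] linear_compose[OF linear_S linear_\<psi>(2)]
    linear_compose[OF linear_S linear_\<psi>(3)] linear_\<psi>
  by (simp_all add: \<rho>_def o_def linear_compose_sub linear_compose_neg)

lemma commutator_skew: "g (A (S x) - S (A x)) y = - g x (A (S y) - S (A y))"
  using A_symmetric S_symmetric
  by (simp add: g_symmetric_def linear_diff[OF linear_g(1)] linear_diff[OF linear_g(2)])

lemma commutator_J: "A (S (J x)) - S (A (J x)) = - J (A (S x) - S (A x))"
  by (simp add: S_J_apply A_J_apply linear_neg[OF linear_A] linear_diff[OF linear_J])

lemma commute_iff_wedge_eq_0: "A \<circ> S = S \<circ> A \<longleftrightarrow> (\<forall>vs. wedge23 \<sigma> \<rho> vs = 0)"
proof -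
  have "A \<circ> S = S \<circ> A \<longleftrightarrow> (\<forall>x. A (S x) - S (A x) = 0)"
    by (simp add: fun_eq_iff)
  also have "\<dots> \<longleftrightarrow> (\<forall>t\<in>{1..6}. wedge23 \<sigma> \<rho> (e \<circ> omit_index t) = 0)"
  proof
    assume "\<forall>x. A (S x) - S (A x) = 0"
    then show "\<forall>t\<in>{1..6}. wedge23 \<sigma> \<rho> (e \<circ> omit_index t) = 0"
      using commutator_coords_wedge by (simp add: atLeastAtMost_1_6)
  next
    assume "\<forall>t\<in>{1..6}. wedge23 \<sigma> \<rho> (e \<circ> omit_index t) = 0"
    then show "\<forall>x. A (S x) - S (A x) = 0"
      using commutator_coords_wedge
      by (intro allI skew_J_antilinear_eq_0 commutator_skew commutator_J
          linear_compose_sub[OF linear_compose[OF linear_S linear_A, unfolded o_def]]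
          linear_compose[OF linear_A linear_S, unfolded o_def]) (auto simp: atLeastAtMost_1_6)
  qed
  also have "\<dots> \<longleftrightarrow> (\<forall>vs. wedge23 \<sigma> \<rho> vs = 0)"
    by (rule wedge23_eq_0_iff_on_omit_index[OF linear_\<sigma> linear_\<rho> basis_expansion, symmetric])
  finally show ?thesis .
qed

lemma unitary_common_eigenbasis:
  assumes commute: "A \<circ> S = S \<circ> A"
  shows "\<exists>f :: nat \<Rightarrow> 'v. (\<forall>i\<in>{1..6}. \<forall>j\<in>{1..6}. g (f i) (f j) = (if i = j then 1 else 0))
    \<and> (\<forall>k\<in>{1,2,3}. J (f (2*k - 1)) = f (2*k))
    \<and> (\<forall>i\<in>{1..6}. \<exists>a b. A (f i) = a *\<^sub>R f i \<and> S (f i) = b *\<^sub>R f i)"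
proof -
  define conj where "conj T y = coords (T (from_coords y))" for T y
  have linear_conj: "linear (conj T)" if "linear T" for T
    using linear_compose[OF linear_compose[OF linear_from_coords that] linear_coords]
    by (simp add: conj_def[abs_def] o_def)
  have inner_conj: "inner (conj T x) y = g (T (from_coords x)) (from_coords y)"
    "inner x (conj T y) = g (from_coords x) (T (from_coords y))" for T x y
    by (simp_all add: conj_def inner_coords[symmetric])
  interpret R6: commuting_J_pair "conj J" "conj A" "conj S"
  proof (rule commuting_J_pair.intro)
    show "linear (conj J)" "linear (conj A)" "linear (conj S)"
      by (simp_all add: linear_conj linear_J linear_A linear_S)
    show "inner (conj J x) y = - inner x (conj J y)" for x y
      by (simp add: inner_conj J_skew)
    show "inner (conj A x) y = inner x (conj A y)" "inner (conj S x) y = inner x (conj S y)" for x y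
      using A_symmetric S_symmetric by (simp_all add: inner_conj g_symmetric_def)
    show "conj J (conj J x) = - x" "conj A (conj J x) = conj J (conj A x)"
      "conj S (conj J x) = - conj J (conj S x)" "conj A (conj S x) = conj S (conj A x)" for x
      using commute by (simp_all add: conj_def A_J_apply S_J_apply linear_neg[OF linear_coords]
          linear_neg[OF linear_J] fun_eq_iff)
  qed
  obtain w :: "nat \<Rightarrow> real \<times> real \<times> real \<times> real \<times> real \<times> real" where
    w: "\<forall>i\<in>{1..6}. \<forall>j\<in>{1..6}. inner (w i) (w j) = (if i = j then 1 else 0)"
      "\<forall>k\<in>{1..3}. conj J (w (2*k - 1)) = w (2*k)"
      "\<forall>i\<in>{1..6}. \<exists>a b. conj A (w i) = a *\<^sub>R w i \<and> conj S (w i) = b *\<^sub>R w i"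
    using R6.unitary_common_eigenbasis[of 3] by auto
  define f where "f i = from_coords (w i)" for i
  have orthonormal: "\<forall>i\<in>{1..6}. \<forall>j\<in>{1..6}. g (f i) (f j) = (if i = j then 1 else 0)"
    using w(1) by (simp add: f_def inner_coords[symmetric])
  have from_coords_eq: "T (f i) = from_coords y" if "conj T (w i) = y" for T i y
  proof -
    have "T (f i) = from_coords (conj T (w i))"
      by (simp add: conj_def f_def)
    with that show ?thesis
      by simp
  qed
  have "J (f (2*k - 1)) = f (2*k)" if "k \<in> {1,2,3}" for k
  proof -
    have "conj J (w (2*k - 1)) = w (2*k)"
      using w(2) that by auto
    then show ?thesis
      unfolding f_def by (rule from_coords_eq[unfolded f_def])
  qed
  moreover have "\<exists>a b. A (f i) = a *\<^sub>R f i \<and> S (f i) = b *\<^sub>R f i" if i: "i \<in> {1..6}" for i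
  proof -
    obtain a b where ab: "conj A (w i) = a *\<^sub>R w i" "conj S (w i) = b *\<^sub>R w i"
      using w(3) i by blast
    have "A (f i) = a *\<^sub>R f i" "S (f i) = b *\<^sub>R f i"
      using from_coords_eq[OF ab(1)] from_coords_eq[OF ab(2)]
      by (simp_all add: linear_scale[OF linear_from_coords] f_def)
    then show ?thesis
      by blast
  qed
  ultimately show ?thesis
    using orthonormal by blast
qed

end

theorem lemma5p1:
  fixes \<omega> g :: "'v::real_vector \<Rightarrow> 'v \<Rightarrow> real"
    and \<psi> :: "'v \<Rightarrow> 'v \<Rightarrow> 'v \<Rightarrow> real"
    and J A S :: "'v \<Rightarrow> 'v"
    and e :: "nat \<Rightarrow> 'v" and c :: "'v \<Rightarrow> nat \<Rightarrow> real"
  assumes su3: "su3_frame \<omega> \<psi> J g e c"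
    and A_lin: "linear A" and A_sym: "g_symmetric g A"
    and AJ: "A \<circ> J = J \<circ> A" and trA: "trace_in e c A = 0"
    and S_lin: "linear S" and S_sym: "g_symmetric g S"
    and SJ: "S \<circ> J = - (J \<circ> S)"
  defines "\<sigma> \<equiv> \<lambda>x y. g (A (J x)) y"
    and "\<rho> \<equiv> \<lambda>x y z. - \<psi> (S x) y z - \<psi> x (S y) z - \<psi> x y (S z)"
  shows "(A \<circ> S = S \<circ> A \<longleftrightarrow> (\<forall>vs. wedge23 \<sigma> \<rho> vs = 0)) \<and>
         (A \<circ> S = S \<circ> A \<longrightarrow>
            (\<exists>f :: nat \<Rightarrow> 'v.
               (\<forall>i\<in>{1..6}. \<forall>j\<in>{1..6}. g (f i) (f j) = (if i = j then 1 else 0)) \<and>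
               (\<forall>k\<in>{1,2,3}. J (f (2*k - 1)) = f (2*k)) \<and>
               (\<forall>i\<in>{1..6}. \<exists>a b. A (f i) = a *\<^sub>R f i \<and> S (f i) = b *\<^sub>R f i)))"
proof -
  interpret su3: su3_endomorphisms \<omega> g \<psi> J e c A S \<sigma> \<rho>
    by (intro su3_endomorphisms.intro su3_basis.intro su3_endomorphisms_axioms.intro su3 A_lin A_sym AJ
        S_lin S_sym SJ) (simp_all add: \<sigma>_def \<rho>_def)
  show ?thesis
    using su3.commute_iff_wedge_eq_0 su3.unitary_common_eigenbasis by blast
qed

end
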